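(* Let $\mathcal{M}$ be a separable metric space, $f:\mathcal{M}\to\mathcal{M}$ a continuous bijection with continuous inverse, $\mathcal{X}\subseteq\mathcal{M}$ forward invariant under $f$, $\mathcal{Z}$ a separable metric space, $g:\mathcal{Z}\to\mathcal{Z}$ a continuous bijection with continuous inverse, and $F:\mathcal{X}\to\mathcal{Z}$ continuous with $F\circ f=g\circ F$ on $\mathcal{X}$. For $\xi\in\mathcal{X}$, if $\alpha_{\mathcal{X}}(\xi)$ is nonempty, then $F(\alpha_{\mathcal{X}}(\xi))\subseteq\alpha_{\mathcal{Z}}(F(\xi))$. Furthermore, if the trajectory through $\xi$ is backward precompact in $\mathcal{X}$, then $F(\alpha_{\mathcal{X}}(\xi))=\alpha_{\mathcal{Z}}(F(\xi))$.
   Context: $\alpha_{\mathcal{X}}(\xi)$ is the set of $x\in\mathcal{X}$ such that $f^{-k_j}(\xi)\to x$ for some indices $k_j\to\infty$, where $f^{-k}$ is the $k$-th iterate of $f^{-1}$; $\alpha_{\mathcal{Z}}(\zeta)$ is the set of $z\in\mathcal{Z}$ with $g^{-k_j}(\zeta)\to z$ for some $k_j\to\infty$. The trajectory through $\xi$ is backward precompact in $\mathcal{X}$ if the closure in $\mathcal{X}$ of $\{f^{-k}(\xi)\mid k\in\mathbb{N}\}$ is compact.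
   Formalization: Both parts hold only for xi whose backward iterates $f^{-k}(\xi)$, for every k in N, all lie in $\mathcal{X}$, not for every $\xi\in\mathcal{X}$. The paper assumes this as well. *)

theory Defs
  imports "HOL-Analysis.Analysis"
begin

text \<open>Here h plays the role of the inverse map, so (h ^^ k) p is the k-th backward iterate.\<close>
definition alpha_limit_set :: "'a::topological_space set \<Rightarrow> ('a \<Rightarrow> 'a) \<Rightarrow> 'a \<Rightarrow> 'a set" where
  "alpha_limit_set S h p =
     {x \<in> S. \<exists>k::nat \<Rightarrow> nat. filterlim k at_top sequentially \<and>
                          ((\<lambda>j. (h ^^ k j) p) \<longlongrightarrow> x) sequentially}"

end

theory Submission
  imports Defs
begin

text \<open>A continuous semiconjugacy F maps the backward orbit of \<xi> onto the backward orbit of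
  F \<xi>, so it maps limits of backward subsequences to limits of backward subsequences.
  Conversely, if the backward orbit is precompact in X, every backward subsequence of F \<xi>
  has a sub-subsequence whose preimages converge in X, and uniqueness of limits identifies
  the limit as an image point.\<close>

lemma funpow_inv_semiconj:
  assumes "surj f" and "inj g"
    and semiconj: "\<And>x. x \<in> X \<Longrightarrow> F (f x) = g (F x)"
    and orbit_in: "\<And>k. (inv f ^^ k) p \<in> X"
  shows "F ((inv f ^^ k) p) = (inv g ^^ k) (F p)"
proof (induction k)
  case 0
  then show ?case by simp
next
  case (Suc k)
  have "g (F ((inv f ^^ Suc k) p)) = F (f ((inv f ^^ Suc k) p))"
    using semiconj[OF orbit_in[of "Suc k"]] by simp
  also have "\<dots> = (inv g ^^ k) (F p)"
    using Suc \<open>surj f\<close> by (simp add: surj_f_inv_f)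
  finally show ?case
    using \<open>inj g\<close> by (metis funpow.simps(2) inv_f_f o_apply)
qed

lemma alpha_limit_set_image_subset:
  fixes F :: "'a::topological_space \<Rightarrow> 'b::topological_space"
  assumes "continuous_on X F"
    and orbit: "\<And>k. F ((h ^^ k) p) = (h' ^^ k) (F p)"
    and orbit_in: "\<And>k. (h ^^ k) p \<in> X"
  shows "F ` alpha_limit_set X h p \<subseteq> alpha_limit_set UNIV h' (F p)"
proof
  fix z assume "z \<in> F ` alpha_limit_set X h p"
  then obtain x k where "x \<in> X" "z = F x" and k: "filterlim k at_top sequentially"
    and lim: "((\<lambda>j. (h ^^ k j) p) \<longlongrightarrow> x) sequentially"
    unfolding alpha_limit_set_def by blast
  have "((\<lambda>j. F ((h ^^ k j) p)) \<longlongrightarrow> F x) sequentially"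
    using continuous_on_tendsto_compose[OF assms(1) lim \<open>x \<in> X\<close>] orbit_in by simp
  then show "z \<in> alpha_limit_set UNIV h' (F p)"
    unfolding alpha_limit_set_def orbit \<open>z = F x\<close> using k by blast
qed

lemma alpha_limit_set_subset_image:
  fixes F :: "'a::first_countable_topology \<Rightarrow> 'b::t2_space"
  assumes "continuous_on X F"
    and orbit: "\<And>k. F ((h ^^ k) p) = (h' ^^ k) (F p)"
    and orbit_in: "\<And>k. (h ^^ k) p \<in> X"
    and precompact: "compact (X \<inter> closure (range (\<lambda>k. (h ^^ k) p)))"
  shows "alpha_limit_set UNIV h' (F p) \<subseteq> F ` alpha_limit_set X h p"
proof
  fix z assume "z \<in> alpha_limit_set UNIV h' (F p)"
  then obtain k where k: "filterlim k at_top sequentially"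
    and lim_z: "((\<lambda>j. (h' ^^ k j) (F p)) \<longlongrightarrow> z) sequentially"
    unfolding alpha_limit_set_def by blast
  have "\<forall>j. (h ^^ k j) p \<in> X \<inter> closure (range (\<lambda>k. (h ^^ k) p))"
    by (intro allI IntI orbit_in subsetD[OF closure_subset] rangeI)
  then obtain x r where "x \<in> X \<inter> closure (range (\<lambda>k. (h ^^ k) p))" and "strict_mono r"
    and "((\<lambda>j. (h ^^ k j) p) \<circ> r) \<longlonglongrightarrow> x"
    using compact_imp_seq_compact[OF precompact] by (elim seq_compactE)
  then have "x \<in> X" and lim_x: "((\<lambda>j. (h ^^ k (r j)) p) \<longlongrightarrow> x) sequentially"
    by (simp_all add: o_def)
  have kr: "filterlim (k \<circ> r) at_top sequentially"
    using filterlim_compose[OF k filterlim_subseq[OF \<open>strict_mono r\<close>]] by (simp add: o_def)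
  have "((\<lambda>j. (h' ^^ k (r j)) (F p)) \<longlongrightarrow> F x) sequentially"
    using continuous_on_tendsto_compose[OF assms(1) lim_x \<open>x \<in> X\<close>] orbit_in
    by (simp add: orbit)
  moreover have "((\<lambda>j. (h' ^^ k (r j)) (F p)) \<longlongrightarrow> z) sequentially"
    using LIMSEQ_subseq_LIMSEQ[OF lim_z \<open>strict_mono r\<close>] by (simp add: o_def)
  ultimately have "z = F x"
    using LIMSEQ_unique by blast
  moreover have "x \<in> alpha_limit_set X h p"
    unfolding alpha_limit_set_def using \<open>x \<in> X\<close> kr lim_x by (auto simp: o_def)
  ultimately show "z \<in> F ` alpha_limit_set X h p" by blast
qed

theorem corollary25:
  fixes f :: "'a::metric_space \<Rightarrow> 'a" and g :: "'b::metric_space \<Rightarrow> 'b"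
    and F :: "'a \<Rightarrow> 'b" and X :: "'a set" and \<xi> :: 'a
  assumes sepM: "separable_space (euclidean :: 'a topology)"
    and f_bij: "bij f" and f_cont: "continuous_on UNIV f" and finv_cont: "continuous_on UNIV (inv f)"
    and X_inv: "f ` X \<subseteq> X"
    and sepZ: "separable_space (euclidean :: 'b topology)"
    and g_bij: "bij g" and g_cont: "continuous_on UNIV g" and ginv_cont: "continuous_on UNIV (inv g)"
    and F_cont: "continuous_on X F"
    and F_conj: "\<And>x. x \<in> X \<Longrightarrow> F (f x) = g (F x)"
    and \<xi>X: "\<xi> \<in> X"
    and back_orbit_X: "\<And>k. ((inv f) ^^ k) \<xi> \<in> X"
  shows "(alpha_limit_set X (inv f) \<xi> \<noteq> {} \<longrightarrow>
            F ` alpha_limit_set X (inv f) \<xi> \<subseteq> alpha_limit_set UNIV (inv g) (F \<xi>))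
       \<and> (compact (X \<inter> closure (range (\<lambda>k. ((inv f) ^^ k) \<xi>))) \<longrightarrow>
            F ` alpha_limit_set X (inv f) \<xi> = alpha_limit_set UNIV (inv g) (F \<xi>))"
proof -
  have orbit: "F ((inv f ^^ k) \<xi>) = (inv g ^^ k) (F \<xi>)" for k
    using f_bij g_bij F_conj back_orbit_X
    by (intro funpow_inv_semiconj[where X = X]) (auto simp: bij_is_surj bij_is_inj)
  have "F ` alpha_limit_set X (inv f) \<xi> \<subseteq> alpha_limit_set UNIV (inv g) (F \<xi>)"
    by (rule alpha_limit_set_image_subset[OF F_cont orbit back_orbit_X])
  moreover have "alpha_limit_set UNIV (inv g) (F \<xi>) \<subseteq> F ` alpha_limit_set X (inv f) \<xi>"
    if "compact (X \<inter> closure (range (\<lambda>k. (inv f ^^ k) \<xi>)))"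
    by (rule alpha_limit_set_subset_image[OF F_cont orbit back_orbit_X that])
  ultimately show ?thesis
    by blast
qed

end
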